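(* Let $N\ge 2$ UAVs $U_1,\dots,U_N$ communicate only in a multi-hop chain, $U_m$ transmitting only to $U_{m+1}$ ($m=1,\dots,N-1$). Consider the problem of minimizing $$\sum_{n=1}^N\int_0^T\big(p_n(t)+v_n(t)F_n(t)\big)\,dt$$ subject to, for all $n\in\{1,\dots,N\}$, $m\in\{1,\dots,N-1\}$, $t\in[0,T]$: $-B_{m+1}\log_2\!\big(1+\tfrac{G_{m(m+1)}}{\sigma^2}\,\tfrac{p_m(t)}{\chi_{m(m+1)}(t)^{\alpha}}\big)\le -\bar r$; $\chi_{m(m+1)}(t)=\|X_{m(m+1)}(t)\|^2$; $q_n(0)=Q_{n,\mathrm{init}}$, $q_n(T)=Q_{n,\mathrm{final}}$; $v_n(0)=v_{n,\mathrm{init}}$; $F_n(t)=m_n\dot v_n(t)+\Omega(v_n(t))$; $\dot q_n(t)=\Upsilon_n v_n(t)$; and simple bounds $0\le p_n(t)\le P_{\max}$, $\underline V_n\le v_n(t)\le\overline V_n$ (and box bounds on the other variables), with no constraints on the thrusts $F_n$. Then every local optimum of this problem is a global optimum.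
   Context: $X_n(t)=(q_n(t),\delta_n,a_n)$ is the position of $U_n$ (constants $\delta_n,a_n$), $X_{m(m+1)}=X_m-X_{m+1}$; $p_m$ is the transmit power of $U_m$, $\bar r>0$ a required constant rate, $B_{m+1},G_{m(m+1)},\sigma^2>0$ constants, $\alpha>1$ the path-loss exponent, $m_n>0$ the mass, $0<\underline V_n\le\overline V_n$, $\Upsilon_n\in\{-1,1\}$. The drag function $\Omega$ satisfies Assumption 1: $\Omega$ is convex and $v\mapsto v\Omega(v)$ is convex on the admissible speed range $[\underline V_n,\overline V_n]$. *)

theory Defs
  imports "HOL-Analysis.Analysis"
begin

text \<open>Problem data of the multi-hop UAV chain problem.  Indices of UAVs run over
  1..N, indices of links (U_m to U_{m+1}) over 1..N-1.\<close>

record uav_data =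
  nU     :: nat
  Thor   :: real
  Bw     :: "nat \<Rightarrow> real"          \<comment> \<open>B_n (link m uses B_{m+1})\<close>
  Gain   :: "nat \<Rightarrow> real"
  sigma2 :: real
  alpha  :: real
  rbar   :: real
  Pmax   :: real
  Vlo    :: "nat \<Rightarrow> real"
  Vhi    :: "nat \<Rightarrow> real"
  mass   :: "nat \<Rightarrow> real"
  Omega  :: "real \<Rightarrow> real"
  Ups    :: "nat \<Rightarrow> real"
  delta  :: "nat \<Rightarrow> real"
  alt    :: "nat \<Rightarrow> real"
  Qinit  :: "nat \<Rightarrow> real"
  Qfinal :: "nat \<Rightarrow> real"
  vinit  :: "nat \<Rightarrow> real"
  Qlo    :: "nat \<Rightarrow> real"
  Qhi    :: "nat \<Rightarrow> real"
  chimax :: "nat \<Rightarrow> real"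

text \<open>A candidate solution: (p, q, v, F, chi), each indexed by UAV / link and time.\<close>
type_synonym uav_sol =
  "(nat \<Rightarrow> real \<Rightarrow> real) \<times> (nat \<Rightarrow> real \<Rightarrow> real) \<times> (nat \<Rightarrow> real \<Rightarrow> real)
   \<times> (nat \<Rightarrow> real \<Rightarrow> real) \<times> (nat \<Rightarrow> real \<Rightarrow> real)"

definition pos :: "uav_data \<Rightarrow> (nat \<Rightarrow> real \<Rightarrow> real) \<Rightarrow> nat \<Rightarrow> real \<Rightarrow> real \<times> real \<times> real" where
  "pos D q n t = (q n t, delta D n, alt D n)"

definition feasible :: "uav_data \<Rightarrow> uav_sol \<Rightarrow> bool" where
  "feasible D s = (case s of (p, q, v, F, chi) \<Rightarrow>
     (\<forall>n\<in>{1..nU D}.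
        continuous_on {0..Thor D} (p n) \<and> continuous_on {0..Thor D} (F n) \<and>
        (\<forall>t\<in>{0..Thor D}. (q n has_real_derivative (Ups D n * v n t)) (at t within {0..Thor D})) \<and>
        (\<exists>v'. \<forall>t\<in>{0..Thor D}. (v n has_real_derivative v' t) (at t within {0..Thor D}) \<and>
                 F n t = mass D n * v' t + Omega D (v n t)) \<and>
        q n 0 = Qinit D n \<and> q n (Thor D) = Qfinal D n \<and> v n 0 = vinit D n \<and>
        (\<forall>t\<in>{0..Thor D}. 0 \<le> p n t \<and> p n t \<le> Pmax D \<and>
            Vlo D n \<le> v n t \<and> v n t \<le> Vhi D n \<and>
            Qlo D n \<le> q n t \<and> q n t \<le> Qhi D n)) \<and>
     (\<forall>m\<in>{1..nU D - 1}. \<forall>t\<in>{0..Thor D}.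
        chi m t = (norm (pos D q m t - pos D q (m + 1) t))\<^sup>2 \<and>
        chi m t \<le> chimax D m \<and>
        - Bw D (m + 1) * log 2 (1 + Gain D m / sigma2 D * (p m t / chi m t powr alpha D))
          \<le> - rbar D))"

definition objective :: "uav_data \<Rightarrow> uav_sol \<Rightarrow> real" where
  "objective D s = (case s of (p, q, v, F, chi) \<Rightarrow>
     (\<Sum>n=1..nU D. integral {0..Thor D} (\<lambda>t. p n t + v n t * F n t)))"

definition close :: "uav_data \<Rightarrow> real \<Rightarrow> uav_sol \<Rightarrow> uav_sol \<Rightarrow> bool" where
  "close D e s s' = (case s of (p, q, v, F, chi) \<Rightarrow> case s' of (p', q', v', F', chi') \<Rightarrow>
     (\<forall>t\<in>{0..Thor D}.
        (\<forall>n\<in>{1..nU D}. \<bar>p n t - p' n t\<bar> < e \<and> \<bar>q n t - q' n t\<bar> < e \<and>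
                        \<bar>v n t - v' n t\<bar> < e \<and> \<bar>F n t - F' n t\<bar> < e) \<and>
        (\<forall>m\<in>{1..nU D - 1}. \<bar>chi m t - chi' m t\<bar> < e)))"

definition local_opt :: "uav_data \<Rightarrow> uav_sol \<Rightarrow> bool" where
  "local_opt D s = (feasible D s \<and>
     (\<exists>e>0. \<forall>s'. feasible D s' \<and> close D e s s' \<longrightarrow> objective D s \<le> objective D s'))"

definition global_opt :: "uav_data \<Rightarrow> uav_sol \<Rightarrow> bool" where
  "global_opt D s = (feasible D s \<and> (\<forall>s'. feasible D s' \<longrightarrow> objective D s \<le> objective D s'))"

end

theory Submission
  imports Defs
begin

text \<open>Substituting \<open>F = m v' + \<Omega>(v)\<close> and integrating \<open>m v v'\<close> turns the cost of UAV \<open>n\<close> into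
  \<open>\<integral> p + v \<Omega>(v) + m/2 (v(T)\<^sup>2 - v(0)\<^sup>2)\<close>, where \<open>v(0)\<close> is prescribed.  Mix two feasible
  solutions linearly in \<open>p, q, v\<close> and in the inertial force \<open>F - \<Omega>(v)\<close>, and recompute \<open>\<chi>\<close> from
  the mixed positions.  The mixture is feasible: the rate constraint reads \<open>p \<ge> K \<chi>\<^sup>\<alpha>\<close>, and \<open>\<chi>\<close>
  is a convex quadratic in \<open>q\<close> that stays positive.  The cost is convex along the mixture, by
  convexity of \<open>v \<Omega>(v)\<close> and of \<open>v\<^sup>2\<close>.  So if \<open>s\<close> is locally optimal, then for any feasible \<open>s'\<close>
  and small \<open>l > 0\<close>, \<open>J(s) \<le> J(mix) \<le> (1 - l) J(s) + l J(s')\<close>, whence \<open>J(s) \<le> J(s')\<close>.\<close>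

lemma convex_comb_atLeastAtMost:
  fixes a b x y l :: real
  assumes "x \<in> {a..b}" "y \<in> {a..b}" "0 \<le> l" "l \<le> 1"
  shows "(1 - l) * x + l * y \<in> {a..b}"
  using convexD_alt[OF convex_real_interval(5) assms] by simp

lemma convex_comb_square_le:
  fixes x y l :: real
  assumes "0 \<le> l" "l \<le> 1"
  shows "((1 - l) * x + l * y)\<^sup>2 \<le> (1 - l) * x\<^sup>2 + l * y\<^sup>2"
proof -
  have "(1 - l) * x\<^sup>2 + l * y\<^sup>2 - ((1 - l) * x + l * y)\<^sup>2 = l * (1 - l) * (x - y)\<^sup>2"
    by (simp add: power2_eq_square algebra_simps)
  moreover have "0 \<le> l * (1 - l) * (x - y)\<^sup>2"
    using assms by simp
  ultimately show ?thesis by linarith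
qed

lemma continuous_nonvanishing_same_sign:
  fixes f :: "real \<Rightarrow> real"
  assumes "continuous_on {a..b} f" "\<forall>t\<in>{a..b}. f t \<noteq> 0" "t \<in> {a..b}"
  shows "0 < f t * f a"
proof (rule ccontr)
  assume "\<not> 0 < f t * f a"
  moreover have "f t \<noteq> 0" "f a \<noteq> 0"
    using assms(2,3) by auto
  ultimately have "f a < 0 \<and> 0 < f t \<or> f t < 0 \<and> 0 < f a"
    by (metis linorder_neqE_linordered_idom mult_neg_neg mult_pos_pos)
  moreover have "continuous_on {a..t} f"
    using assms(3) by (intro continuous_on_subset[OF assms(1)]) auto
  ultimately obtain x where "a \<le> x" "x \<le> t" "f x = 0"
    using IVT'[of f a 0 t] IVT2'[of f t 0 a] assms(3) by force
  then show False
    using assms(2,3) by auto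
qed

lemma convex_comb_nonvanishing:
  fixes d d' :: "real \<Rightarrow> real"
  assumes "continuous_on {a..b} d" "continuous_on {a..b} d'"
    and "\<forall>t\<in>{a..b}. d t \<noteq> 0" "\<forall>t\<in>{a..b}. d' t \<noteq> 0" "d a = d' a"
    and "0 \<le> l" "l \<le> 1" "t \<in> {a..b}"
  shows "(1 - l) * d t + l * d' t \<noteq> 0"
proof -
  have "0 < d t * d a" "0 < d' t * d' a"
    using continuous_nonvanishing_same_sign assms by blast+
  then have "0 < (1 - l) * (d t * d a) + l * (d' t * d' a)"
    using assms(6,7) by (cases "l = 0") (auto intro: add_nonneg_pos)
  also have "\<dots> = ((1 - l) * d t + l * d' t) * d a"
    using assms(5) by (simp add: algebra_simps)
  finally show ?thesis by auto
qed

lemma continuous_on_comp_snd: "continuous_on S f \<Longrightarrow> continuous_on (A \<times> S) (\<lambda>z. f (snd z))"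
  by (rule continuous_on_compose2[OF _ continuous_on_snd]) auto

lemma eventually_at_right_0_uniformly_close:
  fixes h :: "real \<Rightarrow> 'a::metric_space \<Rightarrow> real"
  assumes "continuous_on ({0..1} \<times> S) (\<lambda>z. h (fst z) (snd z))" "compact S" "0 < e"
  shows "\<forall>\<^sub>F l in at_right 0. \<forall>t\<in>S. \<bar>h l t - h 0 t\<bar> < e"
proof -
  have "uniformly_continuous_on ({0..1} \<times> S) (\<lambda>z. h (fst z) (snd z))"
    using assms(1,2) by (intro compact_uniformly_continuous compact_Times) auto
  then obtain d where "0 < d" and d: "\<And>z z'. z \<in> {0..1} \<times> S \<Longrightarrow> z' \<in> {0..1} \<times> S \<Longrightarrow>
      dist z' z < d \<Longrightarrow> dist (h (fst z') (snd z')) (h (fst z) (snd z)) < e"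
    using assms(3) unfolding uniformly_continuous_on_def by metis
  have "\<forall>\<^sub>F l in at_right 0. l \<in> {0<..<min d 1}"
    using \<open>0 < d\<close> by (intro eventually_at_right_real) auto
  then show ?thesis
  proof eventually_elim
    case (elim l)
    show ?case
    proof
      fix t assume "t \<in> S"
      have "dist (l, t) (0, t) < d"
        using elim by (simp add: dist_Pair_Pair dist_real_def)
      then show "\<bar>h l t - h 0 t\<bar> < e"
        using d[of "(0, t)" "(l, t)"] elim \<open>t \<in> S\<close> by (simp add: dist_real_def)
    qed
  qed
qed

lemma le_of_eventually_le_convex_comb:
  fixes f :: "'a \<Rightarrow> real"
  assumes "\<forall>\<^sub>F l in at_right 0. f x \<le> f (c l)"
    and "\<And>l. 0 < l \<Longrightarrow> l < 1 \<Longrightarrow> f (c l) \<le> (1 - l) * f x + l * f y"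
  shows "f x \<le> f y"
proof -
  have "\<forall>\<^sub>F l in at_right 0. f x \<le> f (c l) \<and> l \<in> {0<..<1}"
    using assms(1) eventually_at_right_real[OF zero_less_one] by (auto intro: eventually_conj)
  then obtain l where "f x \<le> f (c l)" "0 < l" "l < 1"
    using eventually_happens'[OF trivial_limit_at_right_real] by auto
  with assms(2) have "f x \<le> (1 - l) * f x + l * f y"
    by (meson order_trans)
  then have "l * f x \<le> l * f y"
    by (simp add: algebra_simps)
  with \<open>0 < l\<close> show ?thesis by simp
qed

lemma log_rate_ge_iff:
  fixes B k p r c a :: real
  assumes "0 < c" "0 < B" "0 < k" "0 \<le> p"
  shows "- B * log 2 (1 + k * (p / c powr a)) \<le> - r \<longleftrightarrow> (2 powr (r / B) - 1) / k * c powr a \<le> p"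
proof -
  have "0 < c powr a"
    using assms(1) by simp
  then have pos: "0 < 1 + k * (p / c powr a)"
    using assms(3,4) by (simp add: add_pos_nonneg)
  have "- B * log 2 (1 + k * (p / c powr a)) \<le> - r \<longleftrightarrow> r / B \<le> log 2 (1 + k * (p / c powr a))"
    using assms(2) by (simp add: divide_le_eq mult.commute)
  also have "\<dots> \<longleftrightarrow> 2 powr (r / B) \<le> 1 + k * (p / c powr a)"
    using pos by (intro le_log_iff) auto
  also have "\<dots> \<longleftrightarrow> (2 powr (r / B) - 1) / k * c powr a \<le> p"
    using assms(3) \<open>0 < c powr a\<close> by (simp add: field_simps)
  finally show ?thesis .
qed

text \<open>By the junk values \<open>0 powr a = 0\<close> and \<open>x / 0 = 0\<close>, the rate at distance \<open>c = 0\<close> is \<open>0\<close>.\<close>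
lemma log_rate_ge_imp_pos:
  fixes B k p r c a :: real
  assumes "0 < r" "- B * log 2 (1 + k * (p / c powr a)) \<le> - r" "0 \<le> c"
  shows "0 < c"
  using assms by (cases "c = 0") auto

lemma integral_speed_times_force:
  fixes p v v' F Om :: "real \<Rightarrow> real"
  assumes "0 \<le> T" "continuous_on {0..T} p" "continuous_on {0..T} (\<lambda>t. Om (v t))"
    and "\<forall>t\<in>{0..T}. (v has_real_derivative v' t) (at t within {0..T}) \<and> F t = M * v' t + Om (v t)"
  shows "integral {0..T} (\<lambda>t. p t + v t * F t)
    = integral {0..T} (\<lambda>t. p t + v t * Om (v t)) + M / 2 * ((v T)\<^sup>2 - (v 0)\<^sup>2)"
proof -
  have "continuous_on {0..T} v"
    using assms(4) by (intro DERIV_continuous_on) auto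
  then have int: "(\<lambda>t. p t + v t * Om (v t)) integrable_on {0..T}"
    using assms(2,3) by (intro integrable_continuous_interval continuous_intros)
  have ftc: "((\<lambda>t. M * (v t * v' t)) has_integral M / 2 * (v T)\<^sup>2 - M / 2 * (v 0)\<^sup>2) {0..T}"
  proof -
    have "((\<lambda>t. M / 2 * (v t)\<^sup>2) has_real_derivative M * (v t * v' t)) (at t within {0..T})"
      if "t \<in> {0..T}" for t
      using assms(4) that by (auto intro!: derivative_eq_intros simp: power2_eq_square)
    then show ?thesis
      using fundamental_theorem_of_calculus[OF assms(1), of "\<lambda>t. M / 2 * (v t)\<^sup>2"]
      by (simp add: has_real_derivative_iff_has_vector_derivative)
  qed
  have "integral {0..T} (\<lambda>t. (p t + v t * Om (v t)) + M * (v t * v' t))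
      = integral {0..T} (\<lambda>t. p t + v t * Om (v t)) + M / 2 * ((v T)\<^sup>2 - (v 0)\<^sup>2)"
    using integral_add[OF int has_integral_integrable[OF ftc]] integral_unique[OF ftc]
    by (simp add: algebra_simps)
  moreover have "integral {0..T} (\<lambda>t. p t + v t * F t) = integral {0..T} (\<lambda>t. (p t + v t * Om (v t)) + M * (v t * v' t))"
    using assms(4) by (intro integral_cong) (auto simp: algebra_simps)
  ultimately show ?thesis by simp
qed

definition uav_feasible ::
    "uav_data \<Rightarrow> nat \<Rightarrow> (real \<Rightarrow> real) \<Rightarrow> (real \<Rightarrow> real) \<Rightarrow> (real \<Rightarrow> real) \<Rightarrow> (real \<Rightarrow> real) \<Rightarrow> bool" where
  "uav_feasible D n p q v F \<longleftrightarrow>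
     continuous_on {0..Thor D} p \<and> continuous_on {0..Thor D} F \<and>
     (\<forall>t\<in>{0..Thor D}. (q has_real_derivative (Ups D n * v t)) (at t within {0..Thor D})) \<and>
     (\<exists>v'. \<forall>t\<in>{0..Thor D}. (v has_real_derivative v' t) (at t within {0..Thor D}) \<and>
        F t = mass D n * v' t + Omega D (v t)) \<and>
     q 0 = Qinit D n \<and> q (Thor D) = Qfinal D n \<and> v 0 = vinit D n \<and>
     (\<forall>t\<in>{0..Thor D}. p t \<in> {0..Pmax D} \<and> v t \<in> {Vlo D n..Vhi D n} \<and> q t \<in> {Qlo D n..Qhi D n})"

definition chi_of :: "uav_data \<Rightarrow> (nat \<Rightarrow> real \<Rightarrow> real) \<Rightarrow> nat \<Rightarrow> real \<Rightarrow> real" where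
  "chi_of D q m t = (norm (pos D q m t - pos D q (m + 1) t))\<^sup>2"

definition rate_met :: "uav_data \<Rightarrow> nat \<Rightarrow> real \<Rightarrow> real \<Rightarrow> bool" where
  "rate_met D m p c \<longleftrightarrow>
     - Bw D (m + 1) * log 2 (1 + Gain D m / sigma2 D * (p / c powr alpha D)) \<le> - rbar D"

lemma feasible_iff:
  "feasible D (p, q, v, F, chi) \<longleftrightarrow>
     (\<forall>n\<in>{1..nU D}. uav_feasible D n (p n) (q n) (v n) (F n)) \<and>
     (\<forall>m\<in>{1..nU D - 1}. \<forall>t\<in>{0..Thor D}. chi m t = chi_of D q m t \<and>
        chi_of D q m t \<le> chimax D m \<and> rate_met D m (p m t) (chi_of D q m t))"
  unfolding feasible_def uav_feasible_def chi_of_def rate_met_def by (simp cong: conj_cong)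

definition transverse_dist2 :: "uav_data \<Rightarrow> nat \<Rightarrow> real" where
  "transverse_dist2 D m = (delta D m - delta D (m + 1))\<^sup>2 + (alt D m - alt D (m + 1))\<^sup>2"

lemma chi_of_eq: "chi_of D q m t = (q m t - q (m + 1) t)\<^sup>2 + transverse_dist2 D m"
  by (simp add: chi_of_def transverse_dist2_def pos_def norm_Pair)

lemma chi_of_convex_comb_le:
  assumes "0 \<le> l" "l \<le> 1"
  shows "chi_of D (\<lambda>n t. (1 - l) * q n t + l * q' n t) m t \<le> (1 - l) * chi_of D q m t + l * chi_of D q' m t"
  using convex_comb_square_le[OF assms, of "q m t - q (m + 1) t" "q' m t - q' (m + 1) t"]
  by (simp add: chi_of_eq algebra_simps)

text \<open>The inertial forces \<open>F - \<Omega>(v) = m v'\<close> are mixed linearly, so the mixed thrust obeys the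
  dynamics of the mixed speed.\<close>
definition mix_thrust :: "uav_data \<Rightarrow> real \<Rightarrow> (real \<Rightarrow> real) \<Rightarrow> (real \<Rightarrow> real) \<Rightarrow>
    (real \<Rightarrow> real) \<Rightarrow> (real \<Rightarrow> real) \<Rightarrow> real \<Rightarrow> real" where
  "mix_thrust D l v F v' F' t =
     (1 - l) * (F t - Omega D (v t)) + l * (F' t - Omega D (v' t)) + Omega D ((1 - l) * v t + l * v' t)"

definition mix_sol :: "uav_data \<Rightarrow> real \<Rightarrow> uav_sol \<Rightarrow> uav_sol \<Rightarrow> uav_sol" where
  "mix_sol D l s s' = (case s of (p, q, v, F, _) \<Rightarrow> case s' of (p', q', v', F', _) \<Rightarrow>
     ((\<lambda>n t. (1 - l) * p n t + l * p' n t), (\<lambda>n t. (1 - l) * q n t + l * q' n t),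
      (\<lambda>n t. (1 - l) * v n t + l * v' n t), (\<lambda>n. mix_thrust D l (v n) (F n) (v' n) (F' n)),
      chi_of D (\<lambda>n t. (1 - l) * q n t + l * q' n t)))"

definition reduced_cost :: "uav_data \<Rightarrow> nat \<Rightarrow> (real \<Rightarrow> real) \<Rightarrow> (real \<Rightarrow> real) \<Rightarrow> real" where
  "reduced_cost D n p v =
     integral {0..Thor D} (\<lambda>t. p t + v t * Omega D (v t)) + mass D n / 2 * ((v (Thor D))\<^sup>2 - (v 0)\<^sup>2)"

locale uav_chain =
  fixes D :: uav_data
  assumes horizon_pos: "0 < Thor D"
    and bandwidth_pos: "\<And>m. m \<in> {1..nU D - 1} \<Longrightarrow> 0 < Bw D (m + 1)"
    and gain_pos: "\<And>m. m \<in> {1..nU D - 1} \<Longrightarrow> 0 < Gain D m"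
    and noise_pos: "0 < sigma2 D"
    and path_loss_ge_1: "1 \<le> alpha D"
    and rate_pos: "0 < rbar D"
    and mass_nonneg: "\<And>n. n \<in> {1..nU D} \<Longrightarrow> 0 \<le> mass D n"
    and min_speed_pos: "\<And>n. n \<in> {1..nU D} \<Longrightarrow> 0 < Vlo D n"
    and drag_convex: "convex_on {0<..} (Omega D)"
    and drag_power_convex: "\<And>n. n \<in> {1..nU D} \<Longrightarrow> convex_on {Vlo D n..Vhi D n} (\<lambda>x. x * Omega D x)"
begin

lemma drag_continuous: "continuous_on {0<..} (Omega D)"
  using convex_on_continuous[OF open_greaterThan drag_convex] .

lemma continuous_on_drag_comp:
  assumes "n \<in> {1..nU D}" "continuous_on S v" "\<forall>t\<in>S. v t \<in> {Vlo D n..Vhi D n}"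
  shows "continuous_on S (\<lambda>t. Omega D (v t))"
proof (rule continuous_on_compose2[OF drag_continuous assms(2)])
  show "v ` S \<subseteq> {0<..}"
    using assms(3) min_speed_pos[OF assms(1)] by force
qed

lemma uav_feasible_continuous:
  assumes "n \<in> {1..nU D}" "uav_feasible D n p q v F"
  shows "continuous_on {0..Thor D} p" "continuous_on {0..Thor D} q" "continuous_on {0..Thor D} v"
    "continuous_on {0..Thor D} F" "continuous_on {0..Thor D} (\<lambda>t. Omega D (v t))"
proof -
  show "continuous_on {0..Thor D} p" "continuous_on {0..Thor D} F"
    using assms(2) unfolding uav_feasible_def by blast+
  show "continuous_on {0..Thor D} q"
    using assms(2) DERIV_continuous_on[of "{0..Thor D}" q "\<lambda>t. Ups D n * v t"]
    unfolding uav_feasible_def by blast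
  show v: "continuous_on {0..Thor D} v"
    using assms(2) unfolding uav_feasible_def by (blast intro: DERIV_continuous_on)
  show "continuous_on {0..Thor D} (\<lambda>t. Omega D (v t))"
    using assms v unfolding uav_feasible_def by (blast intro: continuous_on_drag_comp)
qed

lemma uav_feasible_mix:
  assumes n: "n \<in> {1..nU D}"
    and s: "uav_feasible D n p q v F" and s': "uav_feasible D n p' q' v' F'"
    and l: "0 \<le> l" "l \<le> 1"
  shows "uav_feasible D n (\<lambda>t. (1 - l) * p t + l * p' t) (\<lambda>t. (1 - l) * q t + l * q' t)
    (\<lambda>t. (1 - l) * v t + l * v' t) (mix_thrust D l v F v' F')"
proof -
  let ?I = "{0..Thor D}"
  obtain w where w: "\<forall>t\<in>?I. (v has_real_derivative w t) (at t within ?I) \<and> F t = mass D n * w t + Omega D (v t)"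
    using s unfolding uav_feasible_def by blast
  obtain w' where w': "\<forall>t\<in>?I. (v' has_real_derivative w' t) (at t within ?I) \<and> F' t = mass D n * w' t + Omega D (v' t)"
    using s' unfolding uav_feasible_def by blast
  have box: "(1 - l) * p t + l * p' t \<in> {0..Pmax D}" "(1 - l) * v t + l * v' t \<in> {Vlo D n..Vhi D n}"
      "(1 - l) * q t + l * q' t \<in> {Qlo D n..Qhi D n}" if "t \<in> ?I" for t
    using s s' that l unfolding uav_feasible_def by (blast intro: convex_comb_atLeastAtMost)+
  note c = uav_feasible_continuous[OF n s] and c' = uav_feasible_continuous[OF n s']
  have "continuous_on ?I (\<lambda>t. (1 - l) * v t + l * v' t)"
    using c(3) c'(3) by (intro continuous_intros)
  then have "continuous_on ?I (\<lambda>t. Omega D ((1 - l) * v t + l * v' t))"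
    using box(2) by (intro continuous_on_drag_comp[OF n]) auto
  then have Fc: "continuous_on ?I (mix_thrust D l v F v' F')"
    unfolding mix_thrust_def using c(4,5) c'(4,5) by (intro continuous_intros)
  have pc: "continuous_on ?I (\<lambda>t. (1 - l) * p t + l * p' t)"
    using c(1) c'(1) by (intro continuous_intros)
  have qd: "((\<lambda>t. (1 - l) * q t + l * q' t) has_real_derivative Ups D n * ((1 - l) * v t + l * v' t))
      (at t within ?I)" if "t \<in> ?I" for t
    using s s' that unfolding uav_feasible_def
    by (auto intro!: derivative_eq_intros simp: algebra_simps)
  have vd: "((\<lambda>t. (1 - l) * v t + l * v' t) has_real_derivative (1 - l) * w t + l * w' t) (at t within ?I)
      \<and> mix_thrust D l v F v' F' t = mass D n * ((1 - l) * w t + l * w' t) + Omega D ((1 - l) * v t + l * v' t)"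
    if "t \<in> ?I" for t
    using w w' that unfolding mix_thrust_def by (auto intro!: derivative_eq_intros simp: algebra_simps)
  have ends: "(1 - l) * q 0 + l * q' 0 = Qinit D n" "(1 - l) * q (Thor D) + l * q' (Thor D) = Qfinal D n"
      "(1 - l) * v 0 + l * v' 0 = vinit D n"
    using s s' unfolding uav_feasible_def by (simp_all add: algebra_simps)
  show ?thesis
    unfolding uav_feasible_def
    by (intro conjI exI[of _ "\<lambda>t. (1 - l) * w t + l * w' t"] ballI) (use Fc pc qd vd ends box in auto)
qed

lemma rate_met_imp_pos: "rate_met D m p c \<Longrightarrow> 0 \<le> c \<Longrightarrow> 0 < c"
  unfolding rate_met_def using log_rate_ge_imp_pos[OF rate_pos] by blast

lemma rate_met_mix:
  assumes m: "m \<in> {1..nU D - 1}" and l: "0 \<le> l" "l \<le> 1"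
    and "0 \<le> p" "0 \<le> p'" "0 < c" "0 < c'" "0 < c''" "c'' \<le> (1 - l) * c + l * c'"
    and "rate_met D m p c" "rate_met D m p' c'"
  shows "rate_met D m ((1 - l) * p + l * p') c''"
proof -
  define K where "K = (2 powr (rbar D / Bw D (m + 1)) - 1) / (Gain D m / sigma2 D)"
  have B: "0 < Bw D (m + 1)" and k: "0 < Gain D m / sigma2 D"
    using bandwidth_pos[OF m] gain_pos[OF m] noise_pos by auto
  have threshold: "rate_met D m x y \<longleftrightarrow> K * y powr alpha D \<le> x" if "0 < y" "0 \<le> x" for x y
    unfolding rate_met_def K_def using log_rate_ge_iff[OF that(1) B k that(2)] .
  have "1 \<le> 2 powr (rbar D / Bw D (m + 1))"
    using B rate_pos by (intro ge_one_powr_ge_zero) auto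
  then have "0 \<le> K"
    unfolding K_def using k by (intro divide_nonneg_pos) auto
  have "K * c'' powr alpha D \<le> K * ((1 - l) * c + l * c') powr alpha D"
    using assms \<open>0 \<le> K\<close> path_loss_ge_1 by (intro mult_left_mono powr_mono2) auto
  also have "\<dots> \<le> K * ((1 - l) * c powr alpha D + l * c' powr alpha D)"
    using convex_onD[OF powr_convex[OF path_loss_ge_1], of l c c'] assms \<open>0 \<le> K\<close>
    by (intro mult_left_mono) auto
  also have "\<dots> = (1 - l) * (K * c powr alpha D) + l * (K * c' powr alpha D)"
    by (simp add: algebra_simps)
  also have "\<dots> \<le> (1 - l) * p + l * p'"
    using threshold assms by (intro add_mono mult_left_mono) auto
  finally show ?thesis
    using threshold assms by simp
qed

text \<open>If \<open>U\<^sub>m\<close> and \<open>U\<^sub>m\<^sub>+\<^sub>1\<close> have equal \<open>\<delta>\<close> and \<open>a\<close>, positivity of \<open>\<chi>\<close> means that \<open>q\<^sub>m - q\<^sub>m\<^sub>+\<^sub>1\<close>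
  never vanishes; by continuity it keeps the sign it has at the prescribed initial positions, in
  both solutions alike.\<close>
lemma chi_of_mix_pos:
  assumes s: "feasible D (p, q, v, F, chi)" and s': "feasible D (p', q', v', F', chi')"
    and m: "m \<in> {1..nU D - 1}" and l: "0 \<le> l" "l \<le> 1" and t: "t \<in> {0..Thor D}"
  shows "0 < chi_of D (\<lambda>n t. (1 - l) * q n t + l * q' n t) m t"
proof (cases "transverse_dist2 D m = 0")
  case False
  moreover have "0 \<le> transverse_dist2 D m"
    by (simp add: transverse_dist2_def)
  ultimately show ?thesis
    by (simp add: chi_of_eq add_nonneg_pos)
next
  case True
  define d where "d q t = q m t - q (m + 1) t" for q :: "nat \<Rightarrow> real \<Rightarrow> real" and t
  have mn: "m \<in> {1..nU D}" "m + 1 \<in> {1..nU D}"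
    using m by auto
  have d: "continuous_on {0..Thor D} (d q) \<and> d q 0 = Qinit D m - Qinit D (m + 1) \<and>
      (\<forall>t\<in>{0..Thor D}. d q t \<noteq> 0)" if feas: "feasible D (p, q, v, F, chi)" for p q v F chi
  proof (intro conjI ballI)
    have u: "uav_feasible D m (p m) (q m) (v m) (F m)"
        "uav_feasible D (m + 1) (p (m + 1)) (q (m + 1)) (v (m + 1)) (F (m + 1))"
      using feas mn unfolding feasible_iff by blast+
    show "continuous_on {0..Thor D} (d q)"
      unfolding d_def using uav_feasible_continuous(2)[OF mn(1) u(1)] uav_feasible_continuous(2)[OF mn(2) u(2)] by (intro continuous_intros)
    show "d q 0 = Qinit D m - Qinit D (m + 1)"
      using u unfolding uav_feasible_def d_def by simp
    fix t assume "t \<in> {0..Thor D}"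
    then have "rate_met D m (p m t) (chi_of D q m t)"
      using feas m unfolding feasible_iff by blast
    then have "0 < chi_of D q m t"
      by (rule rate_met_imp_pos) (simp add: chi_of_def)
    then show "d q t \<noteq> 0"
      using True by (simp add: chi_of_eq d_def)
  qed
  have "(1 - l) * d q t + l * d q' t \<noteq> 0"
    using d[OF s] d[OF s'] by (intro convex_comb_nonvanishing[OF _ _ _ _ _ l t]) auto
  then show ?thesis
    using True by (simp add: chi_of_eq d_def algebra_simps)
qed

lemma feasible_mix_sol:
  assumes s: "feasible D s" and s': "feasible D s'" and l: "0 \<le> l" "l \<le> 1"
  shows "feasible D (mix_sol D l s s')"
proof -
  obtain p q v F chi where s_eq: "s = (p, q, v, F, chi)"
    by (cases s)
  obtain p' q' v' F' chi' where s'_eq: "s' = (p', q', v', F', chi')"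
    by (cases s')
  let ?q = "\<lambda>n t. (1 - l) * q n t + l * q' n t"
  have uav: "uav_feasible D n (\<lambda>t. (1 - l) * p n t + l * p' n t) (?q n)
      (\<lambda>t. (1 - l) * v n t + l * v' n t) (mix_thrust D l (v n) (F n) (v' n) (F' n))"
    if "n \<in> {1..nU D}" for n
    using s s' that unfolding s_eq s'_eq feasible_iff by (blast intro: uav_feasible_mix[OF _ _ _ l])
  have link: "chi_of D ?q m t \<le> chimax D m \<and>
      rate_met D m ((1 - l) * p m t + l * p' m t) (chi_of D ?q m t)"
    if m: "m \<in> {1..nU D - 1}" and t: "t \<in> {0..Thor D}" for m t
  proof
    have "m \<in> {1..nU D}"
      using m by auto
    then have p: "0 \<le> p m t" "0 \<le> p' m t"
      using s s' t unfolding s_eq s'_eq feasible_iff uav_feasible_def by auto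
    have c: "chi_of D q m t \<in> {0..chimax D m}" "rate_met D m (p m t) (chi_of D q m t)"
      and c': "chi_of D q' m t \<in> {0..chimax D m}" "rate_met D m (p' m t) (chi_of D q' m t)"
      using s s' m t unfolding s_eq s'_eq feasible_iff by (auto simp: chi_of_def)
    have mix_le: "chi_of D ?q m t \<le> (1 - l) * chi_of D q m t + l * chi_of D q' m t"
      by (rule chi_of_convex_comb_le[OF l])
    then show "chi_of D ?q m t \<le> chimax D m"
      using convex_comb_atLeastAtMost[OF c(1) c'(1) l] by simp
    show "rate_met D m ((1 - l) * p m t + l * p' m t) (chi_of D ?q m t)"
      using c c' p mix_le chi_of_mix_pos[OF s[unfolded s_eq] s'[unfolded s'_eq] m l t]
      by (intro rate_met_mix[OF m l]) (auto intro: rate_met_imp_pos)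
  qed
  show ?thesis
    using uav link by (simp add: s_eq s'_eq mix_sol_def feasible_iff)
qed

lemma integral_cost_eq_reduced_cost:
  assumes n: "n \<in> {1..nU D}" and u: "uav_feasible D n p q v F"
  shows "integral {0..Thor D} (\<lambda>t. p t + v t * F t) = reduced_cost D n p v"
proof -
  obtain w where w: "\<forall>t\<in>{0..Thor D}. (v has_real_derivative w t) (at t within {0..Thor D}) \<and>
      F t = mass D n * w t + Omega D (v t)"
    using u unfolding uav_feasible_def by blast
  with uav_feasible_continuous[OF n u] u horizon_pos show ?thesis
    unfolding reduced_cost_def uav_feasible_def
    by (intro integral_speed_times_force) auto
qed

lemma objective_eq_reduced_cost:
  assumes "feasible D (p, q, v, F, chi)"
  shows "objective D (p, q, v, F, chi) = (\<Sum>n=1..nU D. reduced_cost D n (p n) (v n))"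
  using assms by (auto simp: objective_def feasible_iff intro!: sum.cong integral_cost_eq_reduced_cost)

lemma reduced_cost_mix_le:
  assumes n: "n \<in> {1..nU D}" and u: "uav_feasible D n p q v F" and u': "uav_feasible D n p' q' v' F'"
    and l: "0 \<le> l" "l \<le> 1"
  shows "reduced_cost D n (\<lambda>t. (1 - l) * p t + l * p' t) (\<lambda>t. (1 - l) * v t + l * v' t)
    \<le> (1 - l) * reduced_cost D n p v + l * reduced_cost D n p' v'"
proof -
  let ?I = "{0..Thor D}" and ?T = "Thor D"
  let ?g = "\<lambda>p v t. p t + v t * Omega D (v t)"
  let ?pl = "\<lambda>t. (1 - l) * p t + l * p' t" and ?vl = "\<lambda>t. (1 - l) * v t + l * v' t"
  have "?g p v integrable_on ?I" if "uav_feasible D n p q v F" for p q v F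
    using uav_feasible_continuous[OF n that] by (intro integrable_continuous_interval continuous_intros)
  note int = this[OF u] this[OF u'] this[OF uav_feasible_mix[OF n u u' l]]
  have "?g ?pl ?vl t \<le> (1 - l) * ?g p v t + l * ?g p' v' t" if "t \<in> ?I" for t
  proof -
    have "?vl t * Omega D (?vl t) \<le> (1 - l) * (v t * Omega D (v t)) + l * (v' t * Omega D (v' t))"
      using convex_onD[OF drag_power_convex[OF n], of l "v t" "v' t"] u u' l that
      unfolding uav_feasible_def by auto
    then show ?thesis
      by (simp add: algebra_simps)
  qed
  moreover have scaled: "(\<lambda>t. (1 - l) * ?g p v t) integrable_on ?I" "(\<lambda>t. l * ?g p' v' t) integrable_on ?I"
    using integrable_on_cmult_left[OF int(1), of "1 - l"] integrable_on_cmult_left[OF int(2), of l] by simp_all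
  ultimately have "integral ?I (?g ?pl ?vl) \<le> integral ?I (\<lambda>t. (1 - l) * ?g p v t + l * ?g p' v' t)"
    by (intro integral_le[OF int(3) integrable_add[OF scaled]]) auto
  also have "\<dots> = (1 - l) * integral ?I (?g p v) + l * integral ?I (?g p' v')"
    using integral_add[OF scaled] by simp
  finally have running: "integral ?I (?g ?pl ?vl) \<le> (1 - l) * integral ?I (?g p v) + l * integral ?I (?g p' v')" .
  have "?vl 0 = v 0" "v' 0 = v 0"
    using u u' unfolding uav_feasible_def by (simp_all add: algebra_simps)
  moreover have "(?vl ?T)\<^sup>2 \<le> (1 - l) * (v ?T)\<^sup>2 + l * (v' ?T)\<^sup>2"
    by (rule convex_comb_square_le[OF l])
  ultimately have "mass D n / 2 * ((?vl ?T)\<^sup>2 - (?vl 0)\<^sup>2)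
      \<le> mass D n / 2 * (((1 - l) * (v ?T)\<^sup>2 + l * (v' ?T)\<^sup>2) - (v 0)\<^sup>2)"
    using mass_nonneg[OF n] by (intro mult_left_mono) simp_all
  also have "\<dots> = (1 - l) * (mass D n / 2 * ((v ?T)\<^sup>2 - (v 0)\<^sup>2)) + l * (mass D n / 2 * ((v' ?T)\<^sup>2 - (v' 0)\<^sup>2))"
    using \<open>v' 0 = v 0\<close> by (simp add: field_simps)
  finally show ?thesis
    using running unfolding reduced_cost_def by (simp add: algebra_simps)
qed

lemma objective_mix_sol_le:
  assumes s: "feasible D s" and s': "feasible D s'" and l: "0 \<le> l" "l \<le> 1"
  shows "objective D (mix_sol D l s s') \<le> (1 - l) * objective D s + l * objective D s'"
proof -
  obtain p q v F chi where s_eq: "s = (p, q, v, F, chi)"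
    by (cases s)
  obtain p' q' v' F' chi' where s'_eq: "s' = (p', q', v', F', chi')"
    by (cases s')
  have "objective D (mix_sol D l s s')
      = (\<Sum>n=1..nU D. reduced_cost D n (\<lambda>t. (1 - l) * p n t + l * p' n t) (\<lambda>t. (1 - l) * v n t + l * v' n t))"
    using objective_eq_reduced_cost feasible_mix_sol[OF s s' l] by (simp add: s_eq s'_eq mix_sol_def)
  also have "\<dots> \<le> (\<Sum>n=1..nU D. (1 - l) * reduced_cost D n (p n) (v n) + l * reduced_cost D n (p' n) (v' n))"
    using s s' reduced_cost_mix_le[OF _ _ _ l] unfolding s_eq s'_eq feasible_iff by (blast intro: sum_mono)
  also have "\<dots> = (1 - l) * objective D s + l * objective D s'"
    using s s' by (simp add: s_eq s'_eq objective_eq_reduced_cost sum.distrib sum_distrib_left)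
  finally show ?thesis .
qed

lemma eventually_uav_close_mix:
  assumes n: "n \<in> {1..nU D}" and u: "uav_feasible D n p q v F" and u': "uav_feasible D n p' q' v' F'"
    and e: "0 < e"
  shows "\<forall>\<^sub>F l in at_right 0. \<forall>t\<in>{0..Thor D}. \<bar>p t - ((1 - l) * p t + l * p' t)\<bar> < e \<and>
    \<bar>q t - ((1 - l) * q t + l * q' t)\<bar> < e \<and> \<bar>v t - ((1 - l) * v t + l * v' t)\<bar> < e \<and>
    \<bar>F t - mix_thrust D l v F v' F' t\<bar> < e"
proof -
  let ?I = "{0..Thor D}" and ?R = "{0..1::real} \<times> {0..Thor D}"
  note c = uav_feasible_continuous[OF n u] and c' = uav_feasible_continuous[OF n u']
  note near = eventually_at_right_0_uniformly_close[OF _ compact_Icc e]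
  have lincomb: "\<forall>\<^sub>F l in at_right 0. \<forall>t\<in>?I. \<bar>(1 - l) * f t + l * f' t - f t\<bar> < e"
    if "continuous_on ?I f" "continuous_on ?I f'" for f f'
  proof -
    have "continuous_on ?R (\<lambda>z. (1 - fst z) * f (snd z) + fst z * f' (snd z))"
      using that[THEN continuous_on_comp_snd] by (intro continuous_intros)
    from near[OF this] show ?thesis
      by simp
  qed
  have "continuous_on ?R (\<lambda>z. Omega D ((1 - fst z) * v (snd z) + fst z * v' (snd z)))"
  proof (rule continuous_on_compose2[OF drag_continuous])
    show "continuous_on ?R (\<lambda>z. (1 - fst z) * v (snd z) + fst z * v' (snd z))"
      using c(3)[THEN continuous_on_comp_snd] c'(3)[THEN continuous_on_comp_snd] by (intro continuous_intros)
    have "(1 - l) * v t + l * v' t \<in> {Vlo D n..Vhi D n}" if "l \<in> {0..1}" "t \<in> ?I" for l t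
      using u u' that unfolding uav_feasible_def by (intro convex_comb_atLeastAtMost) auto
    then show "(\<lambda>z. (1 - fst z) * v (snd z) + fst z * v' (snd z)) ` ?R \<subseteq> {0<..}"
      using min_speed_pos[OF n] by (force simp: mem_Times_iff)
  qed
  then have "continuous_on ?R (\<lambda>z. mix_thrust D (fst z) v F v' F' (snd z))"
    unfolding mix_thrust_def using c(4,5)[THEN continuous_on_comp_snd] c'(4,5)[THEN continuous_on_comp_snd]
    by (intro continuous_intros)
  from near[OF this]
  have "\<forall>\<^sub>F l in at_right 0. \<forall>t\<in>?I. \<bar>mix_thrust D l v F v' F' t - F t\<bar> < e"
    by (simp add: mix_thrust_def)
  then show ?thesis
    using lincomb[OF c(1) c'(1)] lincomb[OF c(2) c'(2)] lincomb[OF c(3) c'(3)]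
    by eventually_elim (simp add: abs_minus_commute)
qed

lemma eventually_chi_close_mix:
  assumes s: "feasible D (p, q, v, F, chi)" and s': "feasible D (p', q', v', F', chi')"
    and m: "m \<in> {1..nU D - 1}" and e: "0 < e"
  shows "\<forall>\<^sub>F l in at_right 0. \<forall>t\<in>{0..Thor D}.
    \<bar>chi m t - chi_of D (\<lambda>n t. (1 - l) * q n t + l * q' n t) m t\<bar> < e"
proof -
  have qc: "continuous_on {0..Thor D} (q k)" "continuous_on {0..Thor D} (q' k)" if "k \<in> {1..nU D}" for k
    using s s' that unfolding feasible_iff by (blast intro: uav_feasible_continuous(2))+
  have "m \<in> {1..nU D}" "m + 1 \<in> {1..nU D}"
    using m by auto
  then have "continuous_on ({0..1} \<times> {0..Thor D})
      (\<lambda>z. chi_of D (\<lambda>n t. (1 - fst z) * q n t + fst z * q' n t) m (snd z))"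
    unfolding chi_of_eq using qc by (intro continuous_intros continuous_on_comp_snd) auto
  from eventually_at_right_0_uniformly_close[OF this compact_Icc e]
  have "\<forall>\<^sub>F l in at_right 0. \<forall>t\<in>{0..Thor D}.
      \<bar>chi_of D (\<lambda>n t. (1 - l) * q n t + l * q' n t) m t - chi m t\<bar> < e"
    using s m unfolding feasible_iff by simp
  then show ?thesis
    by eventually_elim (simp add: abs_minus_commute)
qed

lemma eventually_close_mix_sol:
  assumes s: "feasible D s" and s': "feasible D s'" and e: "0 < e"
  shows "\<forall>\<^sub>F l in at_right 0. close D e s (mix_sol D l s s')"
proof -
  obtain p q v F chi where s_eq: "s = (p, q, v, F, chi)"
    by (cases s)
  obtain p' q' v' F' chi' where s'_eq: "s' = (p', q', v', F', chi')"
    by (cases s')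
  have "\<forall>\<^sub>F l in at_right 0. \<forall>n\<in>{1..nU D}. \<forall>t\<in>{0..Thor D}. \<bar>p n t - ((1 - l) * p n t + l * p' n t)\<bar> < e \<and>
      \<bar>q n t - ((1 - l) * q n t + l * q' n t)\<bar> < e \<and> \<bar>v n t - ((1 - l) * v n t + l * v' n t)\<bar> < e \<and>
      \<bar>F n t - mix_thrust D l (v n) (F n) (v' n) (F' n) t\<bar> < e"
    using s s' unfolding s_eq s'_eq feasible_iff
    by (intro eventually_ball_finite ballI eventually_uav_close_mix[OF _ _ _ e]) auto
  moreover have "\<forall>\<^sub>F l in at_right 0. \<forall>m\<in>{1..nU D - 1}. \<forall>t\<in>{0..Thor D}.
      \<bar>chi m t - chi_of D (\<lambda>n t. (1 - l) * q n t + l * q' n t) m t\<bar> < e"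
    using s s' unfolding s_eq s'_eq
    by (intro eventually_ball_finite ballI eventually_chi_close_mix[OF _ _ _ e]) auto
  ultimately show ?thesis
    by eventually_elim (auto simp: s_eq s'_eq close_def mix_sol_def)
qed

lemma local_opt_eventually_le_mix_sol:
  assumes opt: "local_opt D s" and s': "feasible D s'"
  shows "\<forall>\<^sub>F l in at_right 0. objective D s \<le> objective D (mix_sol D l s s')"
proof -
  obtain e where "0 < e" and s: "feasible D s"
    and le: "\<And>s''. feasible D s'' \<Longrightarrow> close D e s s'' \<Longrightarrow> objective D s \<le> objective D s''"
    using opt unfolding local_opt_def by blast
  show ?thesis
    using eventually_close_mix_sol[OF s s' \<open>0 < e\<close>] eventually_at_right_real[OF zero_less_one]
    by eventually_elim (simp add: le feasible_mix_sol[OF s s'])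
qed

end

theorem theorem2:
  fixes D :: uav_data and s :: uav_sol
  assumes "nU D \<ge> 2" and "Thor D > 0"
    and "\<forall>m\<in>{1..nU D - 1}. Bw D (m + 1) > 0 \<and> Gain D m > 0"
    and "sigma2 D > 0" and "alpha D > 1" and "rbar D > 0"
    and "\<forall>n\<in>{1..nU D}. mass D n > 0 \<and> 0 < Vlo D n \<and> Vlo D n \<le> Vhi D n \<and> Ups D n \<in> {-1, 1}"
    and "convex_on {0<..} (Omega D)"
    and "\<forall>n\<in>{1..nU D}. convex_on {Vlo D n..Vhi D n} (\<lambda>x. x * Omega D x)"
    and "local_opt D s"
  shows "global_opt D s"
proof -
  interpret uav_chain D
    using assms(2-9) by unfold_locales (auto intro: less_imp_le)
  have s: "feasible D s"
    using assms(10) unfolding local_opt_def by blast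
  have "objective D s \<le> objective D s'" if s': "feasible D s'" for s'
    using local_opt_eventually_le_mix_sol[OF assms(10) s'] objective_mix_sol_le[OF s s']
    by (rule le_of_eventually_le_convex_comb) auto
  with s show ?thesis
    unfolding global_opt_def by blast
qed

end
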